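(* Let $X,Y,Z$ be finite sets, $T\subseteq X\times Y\times Z$, and let $A\subseteq X$, $B\subseteq Y$, $C\subseteq Z$ be independent random subsets such that each element of $X$ is included in $A$ with probability $\alpha$, independently of the other elements, each element of $Y$ is included in $B$ with probability $\beta$, independently, and each element of $Z$ is included in $C$ with probability $\gamma$, independently. Then $$\Pr[T\cap(A\times B\times C)=\emptyset]\le(1-\alpha)^{|\pi_X(T)|}+(1-\beta)^{\min_{x\in\pi_X(T)}|\pi_Y(T\cap(\{x\}\times Y\times Z))|}+(1-\gamma)^{\min_{(x,y)\in\pi_{XY}(T)}|\pi_Z(T\cap(\{x\}\times\{y\}\times Z))|},$$ where $\pi_X,\pi_Y,\pi_Z,\pi_{XY}$ denote the projections from $X\times Y\times Z$ onto $X$, $Y$, $Z$, $X\times Y$ respectively. *)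

theory Defs
  imports "HOL-Probability.Probability"
begin

definition random_subset :: "'a set \<Rightarrow> real \<Rightarrow> 'a set pmf" where
  "random_subset S p = map_pmf (\<lambda>f. {x\<in>S. f x}) (Pi_pmf S False (\<lambda>_. bernoulli_pmf p))"

definition projX :: "'a \<times> 'b \<times> 'c \<Rightarrow> 'a" where "projX t = fst t"
definition projY :: "'a \<times> 'b \<times> 'c \<Rightarrow> 'b" where "projY t = fst (snd t)"
definition projZ :: "'a \<times> 'b \<times> 'c \<Rightarrow> 'c" where "projZ t = snd (snd t)"
definition projXY :: "'a \<times> 'b \<times> 'c \<Rightarrow> 'a \<times> 'b" where "projXY t = (fst t, fst (snd t))"

end

theory Submission
  imports Defs
begin

text \<open>If \<open>T\<close> misses the box \<open>A \<times> B \<times> C\<close>, then either \<open>A\<close> misses the projection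
  of \<open>T\<close> to \<open>X\<close>, or \<open>A\<close> contains some \<open>x\<close> of it and \<open>B \<times> C\<close> misses the fibre of \<open>T\<close>
  over \<open>x\<close>. Conditioning on \<open>A\<close> (independence) therefore gives a union bound, and the
  same argument one dimension lower bounds the probability that a random rectangle misses
  a fibre. Each one-dimensional event has probability \<open>(1 - p) ^ card U\<close>, the chance that a
  random subset misses a fixed set \<open>U\<close>.\<close>

lemma emeasure_pair_pmf_fibres:
  "emeasure (pair_pmf p q) S = (\<integral>\<^sup>+a. emeasure q (Pair a -` S) \<partial>p)"
  by (simp add: pair_pmf_def bind_return_pmf map_pmf_def[symmetric])

lemma measure_pair_pmf_le_add:
  assumes "0 \<le> c"
    and "\<And>a. a \<in> set_pmf p \<Longrightarrow> a \<notin> G \<Longrightarrow> measure_pmf.prob q (Pair a -` S) \<le> c"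
  shows "measure_pmf.prob (pair_pmf p q) S \<le> measure_pmf.prob p G + c"
proof -
  have "emeasure (pair_pmf p q) S = (\<integral>\<^sup>+a. emeasure q (Pair a -` S) \<partial>p)"
    by (rule emeasure_pair_pmf_fibres)
  also have "\<dots> \<le> (\<integral>\<^sup>+a. (indicator G a + ennreal c) \<partial>p)"
  proof (intro nn_integral_mono_AE AE_pmfI)
    fix a assume a: "a \<in> set_pmf p"
    show "emeasure q (Pair a -` S) \<le> indicator G a + ennreal c"
    proof (cases "a \<in> G")
      case True
      have "emeasure q (Pair a -` S) \<le> 1"
        by (rule measure_pmf.emeasure_le_1)
      with True show ?thesis
        by (simp add: add_increasing2)
    next
      case False
      with assms(2)[OF a] show ?thesis
        by (simp add: measure_pmf.emeasure_eq_measure ennreal_leI)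
    qed
  qed
  also have "\<dots> = ennreal (measure_pmf.prob p G + c)"
    using assms(1) by (simp add: nn_integral_add measure_pmf.emeasure_eq_measure)
  finally have "ennreal (measure_pmf.prob (pair_pmf p q) S) \<le> ennreal (measure_pmf.prob p G + c)"
    by (simp only: measure_pmf.emeasure_eq_measure)
  with assms(1) show ?thesis
    by (simp del: ennreal_plus)
qed

lemma prob_random_subset_disjoint:
  assumes "finite S" "U \<subseteq> S" "0 \<le> p" "p \<le> 1"
  shows "measure_pmf.prob (random_subset S p) {A. A \<inter> U = {}} = (1 - p) ^ card U"
proof -
  have "measure_pmf.prob (random_subset S p) {A. A \<inter> U = {}}
      = measure_pmf.prob (Pi_pmf S False (\<lambda>_. bernoulli_pmf p))
          (Pi S (\<lambda>x. if x \<in> U then {False} else UNIV))"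
    unfolding random_subset_def measure_map_pmf
    by (rule arg_cong[where f="measure_pmf.prob _"]) (use assms in \<open>auto simp: Pi_def\<close>)
  also have "\<dots> = (\<Prod>x\<in>S. if x \<in> U then 1 - p else 1)"
    using assms by (subst measure_Pi_pmf_Pi) (auto intro!: prod.cong simp: measure_pmf_single)
  also have "\<dots> = (1 - p) ^ card U"
    using assms by (subst prod.If_cases) (auto simp: Int_absorb1)
  finally show ?thesis .
qed

lemma prob_random_subset_disjoint_le:
  assumes "finite S" "U \<subseteq> S" "0 \<le> p" "p \<le> 1" "n \<le> card U"
  shows "measure_pmf.prob (random_subset S p) {A. A \<inter> U = {}} \<le> (1 - p) ^ n"
  using assms by (simp add: prob_random_subset_disjoint power_decreasing)

lemma prob_random_rectangle_disjoint_le: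
  fixes R :: "('a \<times> 'b) set"
  assumes "finite Y" "finite Z" "R \<subseteq> Y \<times> Z" "0 \<le> \<beta>" "\<beta> \<le> 1" "0 \<le> \<gamma>" "\<gamma> \<le> 1"
    and "m \<le> card (fst ` R)"
    and n: "\<And>y. y \<in> fst ` R \<Longrightarrow> n \<le> card (R `` {y})"
  shows "measure_pmf.prob (pair_pmf (random_subset Y \<beta>) (random_subset Z \<gamma>))
           {(B, C). R \<inter> (B \<times> C) = {}}
         \<le> (1 - \<beta>) ^ m + (1 - \<gamma>) ^ n"
proof -
  have "measure_pmf.prob (pair_pmf (random_subset Y \<beta>) (random_subset Z \<gamma>))
          {(B, C). R \<inter> (B \<times> C) = {}}
        \<le> measure_pmf.prob (random_subset Y \<beta>) {B. B \<inter> fst ` R = {}} + (1 - \<gamma>) ^ n"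
  proof (rule measure_pair_pmf_le_add)
    fix B assume "B \<notin> {B. B \<inter> fst ` R = {}}"
    then obtain y where y: "y \<in> B" "y \<in> fst ` R" by blast
    have "Pair B -` {(B, C). R \<inter> (B \<times> C) = {}} \<subseteq> {C. C \<inter> R `` {y} = {}}"
      using y by blast
    then have "measure_pmf.prob (random_subset Z \<gamma>) (Pair B -` {(B, C). R \<inter> (B \<times> C) = {}})
        \<le> measure_pmf.prob (random_subset Z \<gamma>) {C. C \<inter> R `` {y} = {}}"
      by (rule measure_pmf.finite_measure_mono) simp
    also have "\<dots> \<le> (1 - \<gamma>) ^ n"
      using assms n[OF y(2)] by (intro prob_random_subset_disjoint_le) auto
    finally show "measure_pmf.prob (random_subset Z \<gamma>) (Pair B -` {(B, C). R \<inter> (B \<times> C) = {}})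
        \<le> (1 - \<gamma>) ^ n" .
  qed (use assms in simp)
  also have "measure_pmf.prob (random_subset Y \<beta>) {B. B \<inter> fst ` R = {}} \<le> (1 - \<beta>) ^ m"
    using assms by (intro prob_random_subset_disjoint_le) auto
  finally show ?thesis by simp
qed

lemma prob_random_box_disjoint_le:
  fixes T :: "('a \<times> 'b \<times> 'c) set"
  assumes "finite X" "finite Y" "finite Z" "T \<subseteq> X \<times> Y \<times> Z"
    and "0 \<le> \<alpha>" "\<alpha> \<le> 1" "0 \<le> \<beta>" "\<beta> \<le> 1" "0 \<le> \<gamma>" "\<gamma> \<le> 1"
    and "l \<le> card (fst ` T)"
    and m: "\<And>x. x \<in> fst ` T \<Longrightarrow> m \<le> card (fst ` (T `` {x}))"
    and n: "\<And>x y. x \<in> fst ` T \<Longrightarrow> y \<in> fst ` (T `` {x}) \<Longrightarrow> n \<le> card ((T `` {x}) `` {y})"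
  shows "measure_pmf.prob
           (pair_pmf (random_subset X \<alpha>) (pair_pmf (random_subset Y \<beta>) (random_subset Z \<gamma>)))
           {(A, B, C). T \<inter> (A \<times> B \<times> C) = {}}
         \<le> (1 - \<alpha>) ^ l + (1 - \<beta>) ^ m + (1 - \<gamma>) ^ n"
proof -
  have "measure_pmf.prob
           (pair_pmf (random_subset X \<alpha>) (pair_pmf (random_subset Y \<beta>) (random_subset Z \<gamma>)))
           {(A, B, C). T \<inter> (A \<times> B \<times> C) = {}}
        \<le> measure_pmf.prob (random_subset X \<alpha>) {A. A \<inter> fst ` T = {}} + ((1 - \<beta>) ^ m + (1 - \<gamma>) ^ n)"
  proof (rule measure_pair_pmf_le_add)
    fix A assume "A \<notin> {A. A \<inter> fst ` T = {}}"
    then obtain x where x: "x \<in> A" "x \<in> fst ` T" by blast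
    have "Pair A -` {(A, B, C). T \<inter> (A \<times> B \<times> C) = {}} \<subseteq> {(B, C). T `` {x} \<inter> (B \<times> C) = {}}"
      using x(1) by blast
    then have "measure_pmf.prob (pair_pmf (random_subset Y \<beta>) (random_subset Z \<gamma>))
          (Pair A -` {(A, B, C). T \<inter> (A \<times> B \<times> C) = {}})
        \<le> measure_pmf.prob (pair_pmf (random_subset Y \<beta>) (random_subset Z \<gamma>))
          {(B, C). T `` {x} \<inter> (B \<times> C) = {}}"
      by (rule measure_pmf.finite_measure_mono) simp
    also have "\<dots> \<le> (1 - \<beta>) ^ m + (1 - \<gamma>) ^ n"
      using assms m[OF x(2)] n[OF x(2)] by (intro prob_random_rectangle_disjoint_le) auto
    finally show "measure_pmf.prob (pair_pmf (random_subset Y \<beta>) (random_subset Z \<gamma>))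
          (Pair A -` {(A, B, C). T \<inter> (A \<times> B \<times> C) = {}})
        \<le> (1 - \<beta>) ^ m + (1 - \<gamma>) ^ n" .
  qed (use assms in simp)
  also have "measure_pmf.prob (random_subset X \<alpha>) {A. A \<inter> fst ` T = {}} \<le> (1 - \<alpha>) ^ l"
    using assms by (intro prob_random_subset_disjoint_le) auto
  finally show ?thesis
    by simp
qed

theorem lemma4p5:
  fixes X :: "'a set" and Y :: "'b set" and Z :: "'c set"
    and T :: "('a \<times> 'b \<times> 'c) set" and \<alpha> \<beta> \<gamma> :: real
  assumes "finite X" "finite Y" "finite Z"
    and "T \<subseteq> X \<times> Y \<times> Z"
    and "0 \<le> \<alpha>" "\<alpha> \<le> 1" "0 \<le> \<beta>" "\<beta> \<le> 1" "0 \<le> \<gamma>" "\<gamma> \<le> 1"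
  shows "measure_pmf.prob
           (pair_pmf (random_subset X \<alpha>) (pair_pmf (random_subset Y \<beta>) (random_subset Z \<gamma>)))
           {(A, B, C). T \<inter> (A \<times> B \<times> C) = {}}
         \<le> (1 - \<alpha>) ^ card (projX ` T)
           + (1 - \<beta>) ^ Min ((\<lambda>x. card (projY ` (T \<inter> ({x} \<times> Y \<times> Z)))) ` projX ` T)
           + (1 - \<gamma>) ^ Min ((\<lambda>(x, y). card (projZ ` (T \<inter> ({x} \<times> {y} \<times> Z)))) ` projXY ` T)"
proof (rule prob_random_box_disjoint_le)
  have "finite T"
    using assms(1-4) by (meson finite_SigmaI finite_subset)
  have projX: "projX ` T = fst ` T"
    by (simp add: projX_def[abs_def])
  have fibre_Y: "projY ` (T \<inter> ({x} \<times> Y \<times> Z)) = fst ` (T `` {x})" for x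
    using assms(4) by (force simp: projY_def)
  have fibre_Z: "projZ ` (T \<inter> ({x} \<times> {y} \<times> Z)) = (T `` {x}) `` {y}" for x y
    using assms(4) by (force simp: projZ_def)
  show "card (projX ` T) \<le> card (fst ` T)"
    by (simp add: projX)
  show "Min ((\<lambda>x. card (projY ` (T \<inter> ({x} \<times> Y \<times> Z)))) ` projX ` T) \<le> card (fst ` (T `` {x}))"
    if "x \<in> fst ` T" for x
    using \<open>finite T\<close> that by (intro Min_le) (auto simp: projX fibre_Y)
  show "Min ((\<lambda>(x, y). card (projZ ` (T \<inter> ({x} \<times> {y} \<times> Z)))) ` projXY ` T) \<le> card ((T `` {x}) `` {y})"
    if "x \<in> fst ` T" "y \<in> fst ` (T `` {x})" for x y
  proof (rule Min_le)
    have "(x, y) \<in> projXY ` T"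
      using that(2) by (force simp: projXY_def)
    then show "card ((T `` {x}) `` {y}) \<in> (\<lambda>(x, y). card (projZ ` (T \<inter> ({x} \<times> {y} \<times> Z)))) ` projXY ` T"
      by (force simp: fibre_Z)
  qed (use \<open>finite T\<close> in simp)
qed (use assms in auto)

end
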